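(* Consider the rendezvous game on a connected graph $G$ against Divider with exactly one agent $D_1$. Suppose that at some moment when it is Facilitator's turn to move, $R$ and $J$ occupy vertices of a cycle $C$ of $G$ that has a shortcut. Then Facilitator has a strategy such that after at most $\ell(C)$ of his moves, $R$ and $J$ occupy vertices of a cycle $C'$ of $G$ with $\ell(C')<\ell(C)$.
   Context: Rendezvous game with adversaries. Let $G$ be a finite, simple, undirected, connected graph, let $s,t\in V(G)$ and let $k\ge 1$ be an integer. Two players play: Facilitator, who controls two agents $R$ and $J$ initially placed on $s$ and $t$ respectively, and Divider, who controls $k$ agents $D_1,\dots,D_k$ which Divider initially places on vertices of $V(G)\setminus\{s,t\}$ of his choice (several agents may share a vertex). After the initial placement the players alternate moves, Facilitator moving first. In a move, the player moves each of his agents to an adjacent vertex or leaves it where it is; no agent may be moved to a vertex currently occupied by an agent of the opponent. Both players have full information. Facilitator wins if at some moment $R$ and $J$ occupy the same vertex; Divider wins if this never happens. $\ell(P)$, $\ell(C)$ denote the number of edges of a path $P$ or cycle $C$. For a cycle $C$ of $G$ and distinct $u,v\in V(C)$, let $P_1,P_2$ be the two internally vertex-disjoint $(u,v)$-paths contained in $C$. $C$ has a $(u,v)$-shortcut if there is a $(u,v)$-path $P$ in $G-(V(C)\setminus\{u,v\})$ with $\ell(P)<\ell(P_1)$ and $\ell(P)<\ell(P_2)$; $C$ has a shortcut if it has a $(u,v)$-shortcut for some distinct $u,v\in V(C)$. *)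

theory Defs
  imports Main
begin

definition simple_graph :: "'a set \<Rightarrow> ('a \<Rightarrow> 'a \<Rightarrow> bool) \<Rightarrow> bool" where
  "simple_graph V E \<longleftrightarrow> finite V \<and> (\<forall>x y. E x y \<longrightarrow> x \<in> V \<and> y \<in> V)
     \<and> (\<forall>x y. E x y \<longrightarrow> E y x) \<and> (\<forall>x. \<not> E x x)"

definition connected_graph :: "'a set \<Rightarrow> ('a \<Rightarrow> 'a \<Rightarrow> bool) \<Rightarrow> bool" where
  "connected_graph V E \<longleftrightarrow> V \<noteq> {} \<and> (\<forall>x\<in>V. \<forall>y\<in>V. E\<^sup>*\<^sup>* x y)"

text \<open>A path is a nonempty list of distinct vertices, consecutive ones adjacent.
  Its length (number of edges) is length P - 1.\<close>
definition is_path :: "'a set \<Rightarrow> ('a \<Rightarrow> 'a \<Rightarrow> bool) \<Rightarrow> 'a list \<Rightarrow> bool" where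
  "is_path V E P \<longleftrightarrow> P \<noteq> [] \<and> distinct P \<and> set P \<subseteq> V
     \<and> (\<forall>i. Suc i < length P \<longrightarrow> E (P ! i) (P ! Suc i))"

text \<open>A cycle is a list of at least 3 distinct vertices, consecutive ones adjacent
  and the last adjacent to the first. Its length (number of edges) is length C.\<close>
definition is_cycle :: "'a set \<Rightarrow> ('a \<Rightarrow> 'a \<Rightarrow> bool) \<Rightarrow> 'a list \<Rightarrow> bool" where
  "is_cycle V E C \<longleftrightarrow> length C \<ge> 3 \<and> distinct C \<and> set C \<subseteq> V
     \<and> (\<forall>i. Suc i < length C \<longrightarrow> E (C ! i) (C ! Suc i))
     \<and> E (last C) (hd C)"

text \<open>C has a (u,v)-shortcut for u = C!i, v = C!j (i \<noteq> j): a (u,v)-path avoiding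
  V(C) - {u,v} that is strictly shorter than both (u,v)-arcs of C, whose lengths
  are |i-j| and length C - |i-j|.\<close>
definition has_shortcut :: "'a set \<Rightarrow> ('a \<Rightarrow> 'a \<Rightarrow> bool) \<Rightarrow> 'a list \<Rightarrow> bool" where
  "has_shortcut V E C \<longleftrightarrow>
     (\<exists>i j P. i < length C \<and> j < length C \<and> i \<noteq> j \<and>
        is_path V E P \<and> hd P = C ! i \<and> last P = C ! j \<and>
        set P \<inter> set C \<subseteq> {C ! i, C ! j} \<and>
        length P - 1 < nat \<bar>int i - int j\<bar> \<and>
        length P - 1 < length C - nat \<bar>int i - int j\<bar>)"

definition step :: "('a \<Rightarrow> 'a \<Rightarrow> bool) \<Rightarrow> 'a \<Rightarrow> 'a \<Rightarrow> bool" where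
  "step E x x' \<longleftrightarrow> x' = x \<or> E x x'"

text \<open>Facilitator's target: R and J have met (game already won), or they both lie
  on a cycle of length < L.\<close>
definition shorter_goal :: "'a set \<Rightarrow> ('a \<Rightarrow> 'a \<Rightarrow> bool) \<Rightarrow> nat \<Rightarrow> 'a \<Rightarrow> 'a \<Rightarrow> bool" where
  "shorter_goal V E L r j \<longleftrightarrow> r = j \<or>
     (\<exists>C'. is_cycle V E C' \<and> r \<in> set C' \<and> j \<in> set C' \<and> length C' < L)"

text \<open>force V E goal n r j d: in the position with R at r, J at j, the single Divider
  agent at d and Facilitator to move, Facilitator has a strategy guaranteeing that
  goal holds for the positions of R, J after at most n of his moves (goal checked
  now and after each of his moves; Divider moves do not change R, J).\<close>
fun force :: "('a \<Rightarrow> 'a \<Rightarrow> bool) \<Rightarrow> ('a \<Rightarrow> 'a \<Rightarrow> bool) \<Rightarrow> nat \<Rightarrow> 'a \<Rightarrow> 'a \<Rightarrow> 'a \<Rightarrow> bool" where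
  "force E goal 0 r j d = goal r j"
| "force E goal (Suc n) r j d = (goal r j \<or>
     (\<exists>r' j'. step E r r' \<and> step E j j' \<and> r' \<noteq> d \<and> j' \<noteq> d \<and>
        (\<forall>d'. step E d d' \<and> d' \<noteq> r' \<and> d' \<noteq> j' \<longrightarrow> force E goal n r' j' d')))"

end

theory Submission
  imports Defs
begin

text \<open>A shortcut P between two vertices u, v of C closes each of the two (u,v)-arcs of C into a
  cycle shorter than C. So it suffices that R and J come to lie on a common closed arc. Facilitator
  walks both agents in one direction around C, moving in each turn one agent whose next vertex is
  not occupied by the single Divider agent; since R and J are on distinct vertices, so are their
  successors, and one of the two moves is always available. Each move brings the agents closer to a
  common arc, and the total distance to be covered is less than the length of C.\<close>

lemma is_path_iff_successively:
  "is_path V E P \<longleftrightarrow> P \<noteq> [] \<and> distinct P \<and> set P \<subseteq> V \<and> successively E P"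
  unfolding is_path_def successively_conv_nth by blast

lemma is_cycle_iff_successively:
  "is_cycle V E C \<longleftrightarrow>
     length C \<ge> 3 \<and> distinct C \<and> set C \<subseteq> V \<and> successively E C \<and> E (last C) (hd C)"
  unfolding is_cycle_def successively_conv_nth by blast

lemma successively_take_drop:
  assumes "successively R xs"
  shows "successively R (take k xs)" and "successively R (drop k xs)"
  using assms successively_append_iff[of R "take k xs" "drop k xs"] by simp_all

lemma nth_mem_take: "p < length xs \<Longrightarrow> p < k \<Longrightarrow> xs ! p \<in> set (take k xs)"
  by (metis length_take min_less_iff_conj nth_mem nth_take)

lemma nth_mem_drop: "k \<le> p \<Longrightarrow> p < length xs \<Longrightarrow> xs ! p \<in> set (drop k xs)"
  using nth_mem[of "p - k" "drop k xs"] by simp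

lemma is_cycle_edge:
  assumes "is_cycle V E C" and "k < length C"
  shows "E (C ! k) (C ! (Suc k mod length C))"
proof (cases "Suc k = length C")
  case True
  then have "length C = Suc k"
    by simp
  moreover have "C \<noteq> []"
    using assms(2) by auto
  ultimately have "C ! k = last C" and "C ! (Suc k mod length C) = hd C"
    by (simp_all add: last_conv_nth hd_conv_nth)
  then show ?thesis
    using assms(1) by (simp add: is_cycle_def)
next
  case False
  then show ?thesis
    using assms by (simp add: is_cycle_def)
qed

lemma is_cycle_rotate1:
  assumes "is_cycle V E C"
  shows "is_cycle V E (rotate1 C)"
proof -
  obtain x xs where C: "C = x # xs" and "xs \<noteq> []"
    using assms unfolding is_cycle_def by (cases C; cases "tl C") auto
  then show ?thesis
    using assms by (auto simp: is_cycle_iff_successively successively_append_iff successively_Cons)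
qed

lemma is_cycle_rotate:
  assumes "is_cycle V E C"
  shows "is_cycle V E (rotate k C)"
  by (induction k) (simp_all add: assms is_cycle_rotate1)

lemma has_shortcut_from_hd_of_rotation:
  assumes "has_shortcut V E C"
  obtains k j P where "0 < j" "j < length C" "is_path V E P"
    "hd P = hd (rotate k C)" "last P = rotate k C ! j" "set P \<inter> set C \<subseteq> {hd P, last P}"
    "length P - 1 < j" "length P - 1 < length C - j"
proof -
  obtain a b P where ab: "a < length C" "b < length C" "a \<noteq> b" and P: "is_path V E P"
    and ends: "hd P = C ! a" "last P = C ! b" and avoids: "set P \<inter> set C \<subseteq> {C ! a, C ! b}"
    and short: "length P - 1 < nat \<bar>int a - int b\<bar>" "length P - 1 < length C - nat \<bar>int a - int b\<bar>"
    using assms unfolding has_shortcut_def by blast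
  define j where "j = (if a < b then b - a else length C - (a - b))"
  have j: "0 < j" "j < length C" and "(a + j) mod length C = b"
    using ab by (auto simp: j_def)
  then have "hd (rotate a C) = C ! a" "rotate a C ! j = C ! b"
    using ab hd_rotate_conv_nth[of C a] nth_rotate[of j C a] by force+
  moreover have "length P - 1 < j" "length P - 1 < length C - j"
    using ab short by (auto simp: j_def)
  ultimately show thesis
    using that[of j P a] j P ends avoids by simp
qed

lemma is_cycle_butlast_append_path:
  assumes P: "is_path V E P" "2 \<le> length P" and Q: "is_path V E Q"
    and joined: "hd Q = last P" "E (last Q) (hd P)"
    and disjoint: "set (butlast P) \<inter> set Q = {}" and long: "3 \<le> length P - 1 + length Q"
  shows "is_cycle V E (butlast P @ Q)"
proof -
  have Pp: "P \<noteq> []" "distinct P" "set P \<subseteq> V" "successively E P"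
    using P(1) by (simp_all add: is_path_iff_successively)
  have Qp: "Q \<noteq> []" "distinct Q" "set Q \<subseteq> V" "successively E Q"
    using Q by (simp_all add: is_path_iff_successively)
  have ne: "butlast P \<noteq> []"
    using P(2) by (cases P rule: rev_cases) auto
  have "successively E (butlast P @ [last P])"
    using Pp by (simp add: append_butlast_last_id)
  then have "successively E (butlast P)" "E (last (butlast P)) (hd Q)"
    using ne joined(1) by (simp_all add: successively_append_iff)
  then have "successively E (butlast P @ Q)"
    using Qp ne by (simp add: successively_append_iff)
  moreover have "hd (butlast P @ Q) = hd P"
    using ne Pp(1) by (metis append_butlast_last_id hd_append2)
  moreover have "distinct (butlast P @ Q)"
    using Pp(2) Qp(2) disjoint by (simp add: distinct_butlast)
  moreover have "set (butlast P @ Q) \<subseteq> V"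
    using Pp(3) Qp(3) by (auto dest: in_set_butlastD)
  ultimately show ?thesis
    using Qp(1) joined(2) long by (simp add: is_cycle_iff_successively)
qed

lemma force_of_goal: "goal r j \<Longrightarrow> force E goal m r j d"
  by (cases m) simp_all

lemma force_by_advancing_along_cycle:
  fixes good :: "nat \<Rightarrow> nat \<Rightarrow> bool" and potential :: "nat \<Rightarrow> nat \<Rightarrow> nat"
  assumes cycle: "is_cycle V E C"
    and goal: "\<And>p q. p < length C \<Longrightarrow> q < length C \<Longrightarrow> good p q \<Longrightarrow> goal (C ! p) (C ! q)"
    and good_diag: "\<And>p. good p p"
    and advance_fst: "\<And>p q. p < length C \<Longrightarrow> q < length C \<Longrightarrow> \<not> good p q \<Longrightarrow>
      good (Suc p mod length C) q \<or> potential (Suc p mod length C) q < potential p q"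
    and advance_snd: "\<And>p q. p < length C \<Longrightarrow> q < length C \<Longrightarrow> \<not> good p q \<Longrightarrow>
      good p (Suc q mod length C) \<or> potential p (Suc q mod length C) < potential p q"
  shows "p < length C \<Longrightarrow> q < length C \<Longrightarrow> d \<noteq> C ! p \<Longrightarrow> d \<noteq> C ! q \<Longrightarrow>
    good p q \<or> potential p q < m \<Longrightarrow> force E goal m (C ! p) (C ! q) d"
proof (induction m arbitrary: p q d)
  case 0
  then show ?case
    using goal by simp
next
  case (Suc m)
  let ?n = "length C" and ?adv = "\<lambda>k. Suc k mod length C"
  show ?case
  proof (cases "good p q")
    case True
    then show ?thesis
      using goal Suc.prems by (simp add: force_of_goal)
  next
    case bad: False
    then have bound: "potential p q < Suc m"
      using Suc.prems(5) by simp
    have "0 < ?n"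
      using Suc.prems(1) by linarith
    then have adv_lt: "?adv p < ?n" "?adv q < ?n"
      by simp_all
    have "p \<noteq> q"
      using bad good_diag by metis
    then have "?adv p \<noteq> ?adv q"
      using Suc.prems(1,2) by (simp add: mod_Suc)
    then have "C ! ?adv p \<noteq> C ! ?adv q"
      using cycle adv_lt by (simp add: is_cycle_def nth_eq_iff_index_eq)
    then consider "d \<noteq> C ! ?adv p" | "d \<noteq> C ! ?adv q"
      by blast
    then show ?thesis
    proof cases
      case 1
      have "good (?adv p) q \<or> potential (?adv p) q < m"
        using advance_fst[OF Suc.prems(1,2) bad] bound by linarith
      then have "force E goal m (C ! ?adv p) (C ! q) d'"
        if "d' \<noteq> C ! ?adv p" "d' \<noteq> C ! q" for d'
        using Suc.IH[OF adv_lt(1) Suc.prems(2) that] by blast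
      moreover have "step E (C ! p) (C ! ?adv p)"
        using is_cycle_edge[OF cycle Suc.prems(1)] by (simp add: step_def)
      ultimately show ?thesis
        using 1 Suc.prems(4) by (auto simp: step_def)
    next
      case 2
      have "good p (?adv q) \<or> potential p (?adv q) < m"
        using advance_snd[OF Suc.prems(1,2) bad] bound by linarith
      then have "force E goal m (C ! p) (C ! ?adv q) d'"
        if "d' \<noteq> C ! p" "d' \<noteq> C ! ?adv q" for d'
        using Suc.IH[OF Suc.prems(1) adv_lt(2) that] by blast
      moreover have "step E (C ! q) (C ! ?adv q)"
        using is_cycle_edge[OF cycle Suc.prems(2)] by (simp add: step_def)
      ultimately show ?thesis
        using 2 Suc.prems(3) by (auto simp: step_def)
    qed
  qed
qed

definition on_common_arc :: "nat \<Rightarrow> nat \<Rightarrow> nat \<Rightarrow> bool" where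
  "on_common_arc j p q \<longleftrightarrow> (p \<le> j \<and> q \<le> j) \<or> ((p = 0 \<or> j \<le> p) \<and> (q = 0 \<or> j \<le> q))"

text \<open>Positions are indices into the cycle, and the two closed arcs are [0, j] and [j, n] with n
  identified with 0. If R and J are not on a common arc, one of them lies strictly inside the first
  arc and must advance to j, the other strictly inside the second and must advance to n.\<close>
definition arc_potential :: "nat \<Rightarrow> nat \<Rightarrow> nat \<Rightarrow> nat \<Rightarrow> nat" where
  "arc_potential n j p q = (if p < j then (j - p) + (n - q) else (n - p) + (j - q))"

lemma on_common_arc_refl: "on_common_arc j p p"
  by (auto simp: on_common_arc_def)

lemma arc_potential_decreases:
  assumes "0 < j" "j < n" "p < n" "q < n" "\<not> on_common_arc j p q"
  shows "on_common_arc j (Suc p mod n) q \<or> arc_potential n j (Suc p mod n) q < arc_potential n j p q"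
    and "on_common_arc j p (Suc q mod n) \<or> arc_potential n j p (Suc q mod n) < arc_potential n j p q"
    and "arc_potential n j p q < n"
proof -
  have "Suc p mod n = (if Suc p = n then 0 else Suc p)" "Suc q mod n = (if Suc q = n then 0 else Suc q)"
    using assms(3,4) by (simp_all add: mod_Suc)
  then show "on_common_arc j (Suc p mod n) q \<or> arc_potential n j (Suc p mod n) q < arc_potential n j p q"
    and "on_common_arc j p (Suc q mod n) \<or> arc_potential n j p (Suc q mod n) < arc_potential n j p q"
    using assms unfolding on_common_arc_def arc_potential_def by auto
  show "arc_potential n j p q < n"
    using assms unfolding on_common_arc_def arc_potential_def by auto
qed

locale shortcut_from_hd =
  fixes V :: "'a set" and E :: "'a \<Rightarrow> 'a \<Rightarrow> bool" and C P :: "'a list" and j :: nat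
  assumes cycle: "is_cycle V E C" and sym: "\<And>x y. E x y \<Longrightarrow> E y x"
    and path: "is_path V E P" and j: "0 < j" "j < length C"
    and hd_path: "hd P = hd C" and last_path: "last P = C ! j"
    and avoids: "set P \<inter> set C \<subseteq> {hd P, last P}"
    and short: "length P - 1 < j" "length P - 1 < length C - j"
begin

lemma cycle_ne: "C \<noteq> []"
  using j by auto

lemma hd_cycle: "hd C = C ! 0"
  using cycle_ne by (simp add: hd_conv_nth)

lemma butlast_path:
  shows "2 \<le> length P" and "hd C \<in> set (butlast P)" and "set (butlast P) \<inter> set C \<subseteq> {hd C}"
proof -
  have "C ! 0 \<noteq> C ! j"
    using cycle j cycle_ne nth_eq_iff_index_eq[of C 0 j] by (simp add: is_cycle_def)
  then have "hd P \<noteq> last P"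
    using hd_cycle hd_path last_path by simp
  then show long: "2 \<le> length P"
    using path by (cases P; cases "tl P") (auto simp: is_path_def)
  have P_split: "P = butlast P @ [last P]"
    using path by (simp add: is_path_def)
  moreover have "butlast P \<noteq> []"
    using long by (cases P) auto
  ultimately show "hd C \<in> set (butlast P)"
    using hd_path by (metis hd_append2 hd_in_set)
  have "distinct (butlast P @ [last P])"
    using path P_split by (simp add: is_path_def)
  then have "last P \<notin> set (butlast P)"
    by simp
  then show "set (butlast P) \<inter> set C \<subseteq> {hd C}"
    using avoids hd_path by (auto dest: in_set_butlastD)
qed

lemma hd_notin_drop: "0 < k \<Longrightarrow> hd C \<notin> set (drop k C)"
  using cycle by (cases C; cases k) (auto simp: is_cycle_def dest: in_set_dropD)

lemma shorter_cycle_through_inner_arc: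
  obtains C' where "is_cycle V E C'" "length C' < length C" "set (take (Suc j) C) \<subseteq> set C'"
proof -
  define A where "A = take j (drop 1 C)"
  define Q where "Q = rev A"
  have A: "length A = j" "A \<noteq> []" "A ! 0 = C ! 1" "A ! (length A - 1) = C ! j"
    using j by (auto simp: A_def)
  have "distinct C" "set C \<subseteq> V" "successively E C"
    using cycle by (auto simp: is_cycle_iff_successively)
  then have "is_path V E Q"
    using j unfolding Q_def A_def is_path_iff_successively
    by (auto dest!: in_set_takeD in_set_dropD intro: successively_take_drop successively_mono sym)
  moreover have "hd Q = last P" "last Q = C ! 1"
    using A last_path by (simp_all add: Q_def hd_rev last_rev last_conv_nth hd_conv_nth)
  moreover have "E (C ! 1) (hd P)"
    using sym is_cycle_edge[OF cycle, of 0] hd_path hd_cycle j cycle_ne by simp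
  moreover have "set (butlast P) \<inter> set Q = {}"
    using butlast_path(3) hd_notin_drop[of 1] set_take_subset[of j "drop 1 C"] set_drop_subset[of 1 C]
    by (auto simp: Q_def A_def)
  ultimately have "is_cycle V E (butlast P @ Q)"
    using A(1) short butlast_path(1)
    by (intro is_cycle_butlast_append_path[OF path]) (simp_all add: Q_def)
  moreover have "length (butlast P @ Q) < length C"
    using A(1) short by (simp add: Q_def)
  moreover have "take (Suc j) C = hd C # A"
    using cycle_ne by (cases C) (simp_all add: A_def)
  then have "set (take (Suc j) C) \<subseteq> set (butlast P @ Q)"
    using butlast_path(2) by (auto simp: Q_def)
  ultimately show thesis
    using that by blast
qed

lemma shorter_cycle_through_outer_arc:
  obtains C' where "is_cycle V E C'" "length C' < length C" "insert (hd C) (set (drop j C)) \<subseteq> set C'"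
proof -
  define Q where "Q = drop j C"
  have "distinct C" "set C \<subseteq> V" "successively E C"
    using cycle by (auto simp: is_cycle_iff_successively)
  then have "is_path V E Q"
    using j by (auto simp: is_path_iff_successively Q_def successively_take_drop dest: in_set_dropD)
  moreover have "hd Q = last P" "last Q = last C"
    using j last_path by (simp_all add: Q_def hd_drop_conv_nth)
  moreover have "E (last C) (hd P)"
    using cycle hd_path by (simp add: is_cycle_def)
  moreover have "hd C \<notin> set Q"
    using hd_notin_drop j by (simp add: Q_def)
  then have "set (butlast P) \<inter> set Q = {}"
    using butlast_path(3) by (auto simp: Q_def dest: in_set_dropD)
  ultimately have "is_cycle V E (butlast P @ Q)"
    using j short butlast_path(1)
    by (intro is_cycle_butlast_append_path[OF path]) (simp_all add: Q_def)
  moreover have "length (butlast P @ Q) < length C"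
    using j short by (simp add: Q_def)
  moreover have "insert (hd C) (set (drop j C)) \<subseteq> set (butlast P @ Q)"
    using butlast_path(2) by (auto simp: Q_def)
  ultimately show thesis
    using that by blast
qed

lemma shorter_goal_if_on_common_arc:
  assumes "p < length C" "q < length C" "on_common_arc j p q"
  shows "shorter_goal V E (length C) (C ! p) (C ! q)"
proof -
  from assms(3) consider (inner) "p \<le> j" "q \<le> j" | (outer) "p = 0 \<or> j \<le> p" "q = 0 \<or> j \<le> q"
    unfolding on_common_arc_def by blast
  then show ?thesis
  proof cases
    case inner
    then have "C ! p \<in> set (take (Suc j) C)" "C ! q \<in> set (take (Suc j) C)"
      using assms(1,2) by (simp_all add: nth_mem_take)
    moreover obtain C' where "is_cycle V E C'" "length C' < length C" "set (take (Suc j) C) \<subseteq> set C'"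
      by (rule shorter_cycle_through_inner_arc)
    ultimately show ?thesis
      unfolding shorter_goal_def by blast
  next
    case outer
    have "C ! k \<in> insert (hd C) (set (drop j C))" if "k < length C" "k = 0 \<or> j \<le> k" for k
      using that(2) by (elim disjE) (simp_all add: hd_cycle nth_mem_drop that(1))
    then have "C ! p \<in> insert (hd C) (set (drop j C))" "C ! q \<in> insert (hd C) (set (drop j C))"
      using assms(1,2) outer by blast+
    moreover obtain C' where "is_cycle V E C'" "length C' < length C"
      "insert (hd C) (set (drop j C)) \<subseteq> set C'"
      by (rule shorter_cycle_through_outer_arc)
    ultimately show ?thesis
      unfolding shorter_goal_def by blast
  qed
qed

lemma force_shorter_goal:
  assumes "r \<in> set C" "s \<in> set C" "d \<noteq> r" "d \<noteq> s"
  shows "force E (shorter_goal V E (length C)) (length C) r s d"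
proof -
  obtain p q where pq: "p < length C" "q < length C" "r = C ! p" "s = C ! q"
    using assms(1,2) by (auto simp: in_set_conv_nth)
  have "on_common_arc j p q \<or> arc_potential (length C) j p q < length C"
    using arc_potential_decreases(3)[OF j pq(1,2)] by blast
  then have "force E (shorter_goal V E (length C)) (length C) (C ! p) (C ! q) d"
    using assms(3,4) pq
    by (intro force_by_advancing_along_cycle[where goal = "shorter_goal V E (length C)"
        and good = "on_common_arc j", OF cycle shorter_goal_if_on_common_arc on_common_arc_refl
        arc_potential_decreases(1,2)[OF j]]) simp_all
  then show ?thesis
    using pq by simp
qed

end

theorem claim1:
  fixes V :: "'a set" and E :: "'a \<Rightarrow> 'a \<Rightarrow> bool" and C :: "'a list" and r j d :: 'a
  assumes "simple_graph V E" and "connected_graph V E"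
    and "is_cycle V E C" and "has_shortcut V E C"
    and "r \<in> set C" and "j \<in> set C"
    and "d \<in> V" and "d \<noteq> r" and "d \<noteq> j"
  shows "force E (shorter_goal V E (length C)) (length C) r j d"
proof -
  obtain k i P where shortcut: "0 < i" "i < length C" "is_path V E P"
    "hd P = hd (rotate k C)" "last P = rotate k C ! i" "set P \<inter> set C \<subseteq> {hd P, last P}"
    "length P - 1 < i" "length P - 1 < length C - i"
    using has_shortcut_from_hd_of_rotation[OF assms(4)] .
  interpret shortcut_from_hd V E "rotate k C" P i
  proof
    show "is_cycle V E (rotate k C)"
      using assms(3) by (rule is_cycle_rotate)
    show "E y x" if "E x y" for x y
      using assms(1) that by (simp add: simple_graph_def)
    show "set P \<inter> set (rotate k C) \<subseteq> {hd P, last P}"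
      using shortcut(6) by (simp only: set_rotate)
  qed (use shortcut in \<open>simp_all only: length_rotate\<close>)
  have "r \<in> set (rotate k C)" "j \<in> set (rotate k C)"
    using assms(5,6) by (simp_all only: set_rotate)
  from force_shorter_goal[OF this assms(8,9)] show ?thesis
    by (simp only: length_rotate)
qed

end
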